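(* Let $X$ be a random vector in $\mathbb{R}^n$ with distribution $p_X$, let $f_{\boldsymbol\eta}:\mathbb{R}^n\to\mathbb{R}^m$ be a deterministic function depending on a parameter $\boldsymbol\eta\in\mathbb{R}^d$, let $t>0$, and let $Z_t\sim\mathcal N(\mathbf 0,t\mathbf I_m)$ be independent of $X$. Define the channel output $Y_t=f_{\boldsymbol\eta}(X)+Z_t$, with marginal density $p_{Y_t,\boldsymbol\eta}$, and its marginal score $s_{Y_t}(\mathbf y)=\nabla_{\mathbf y}\log p_{Y_t,\boldsymbol\eta}(\mathbf y)$. Under standard regularity conditions ($f_{\boldsymbol\eta}$ differentiable with respect to $\boldsymbol\eta$, and differentiation with respect to $\boldsymbol\eta$ may be exchanged with expectation and integration), the gradient of the mutual information with respect to $\boldsymbol\eta$ is $$\nabla_{\boldsymbol\eta} I(X;Y_t) = -\mathbb{E}_{X,Z_t}\!\left[ Df_{\boldsymbol\eta}(X)^\top\, s_{Y_t}\big(f_{\boldsymbol\eta}(X)+Z_t\big)\right],$$ where $Df_{\boldsymbol\eta}(\mathbf x)\in\mathbb{R}^{m\times d}$ denotes the Jacobian of $\boldsymbol\eta\mapsto f_{\boldsymbol\eta}(\mathbf x)$ with respect to $\boldsymbol\eta$, i.e. $[Df_{\boldsymbol\eta}(\mathbf x)]_{ij}=\partial f_{\boldsymbol\eta,i}(\mathbf x)/\partial\eta_j$.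
   Context: $I(\cdot;\cdot)$ denotes mutual information (natural logarithms). The marginal density $p_{Y_t,\boldsymbol\eta}$ of $Y_t$ depends on $\boldsymbol\eta$ through $f_{\boldsymbol\eta}$. *)

theory Defs
  imports "HOL-Analysis.Analysis" "HOL-Probability.Probability"
begin

definition gauss_dens :: "real \<Rightarrow> real^'m \<Rightarrow> real" where
  "gauss_dens t z = (2 * pi * t) powr (- real CARD('m) / 2) * exp (- (norm z)\<^sup>2 / (2 * t))"

definition marg_dens ::
  "real \<Rightarrow> (real^'d \<Rightarrow> real^'n \<Rightarrow> real^'m) \<Rightarrow> (real^'n) measure \<Rightarrow> real^'d \<Rightarrow> real^'m \<Rightarrow> real" where
  "marg_dens t f PX eta y = (\<integral>x. gauss_dens t (y - f eta x) \<partial>PX)"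

definition score ::
  "real \<Rightarrow> (real^'d \<Rightarrow> real^'n \<Rightarrow> real^'m) \<Rightarrow> (real^'n) measure \<Rightarrow> real^'d \<Rightarrow> real^'m \<Rightarrow> real^'m" where
  "score t f PX eta y = (SOME s. GDERIV (\<lambda>u. ln (marg_dens t f PX eta u)) y :> s)"

text \<open>Regularity: differentiation in the parameter theta (at theta = q) may be exchanged
  with integration against N, for the family F.\<close>
definition diff_under_integral ::
  "'b measure \<Rightarrow> ('p::euclidean_space \<Rightarrow> 'b \<Rightarrow> real) \<Rightarrow> 'p \<Rightarrow> bool" where
  "diff_under_integral N F q \<longleftrightarrow>
     (\<forall>D. (\<forall>w\<in>space N. ((\<lambda>\<theta>. F \<theta> w) has_derivative D w) (at q)) \<longrightarrow>
        (\<forall>h. integrable N (\<lambda>w. D w h)) \<and>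
        ((\<lambda>\<theta>. \<integral>w. F \<theta> w \<partial>N) has_derivative (\<lambda>h. \<integral>w. D w h \<partial>N)) (at q))"

end

theory Submission
  imports Defs
begin

text \<open>
  Since \<open>Z\<close> is independent of \<open>X\<close> with Gaussian density \<open>g\<close>, the pair \<open>(X, Y)\<close> with
  \<open>Y = f\<^sub>\<eta>(X) + Z\<close> has density \<open>g(y - f\<^sub>\<eta>(x))\<close> with respect to \<open>P\<^sub>X \<otimes> Lebesgue\<close>, and \<open>Y\<close>
  has density \<open>p\<^sub>\<eta>(y) = E g(y - f\<^sub>\<eta>(X))\<close>. Hence \<open>I(X;Y) = \<integral> g ln g - \<integral> p\<^sub>\<eta> ln p\<^sub>\<eta>\<close>, and
  only the second term depends on \<open>\<eta>\<close>. Differentiating it under the integral, the term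
  \<open>\<integral> \<partial>p\<^sub>\<eta>\<close> vanishes because every \<open>p\<^sub>\<eta>\<close> has mass one, leaving \<open>-\<integral> \<partial>p\<^sub>\<eta> ln p\<^sub>\<eta>\<close>.
  Writing \<open>\<partial>p\<^sub>\<eta>\<close> as an expectation over \<open>X\<close> and exchanging the integrals, for fixed \<open>x\<close>
  the inner integral is a Gaussian integration by parts (Stein's identity): it is the
  derivative in \<open>b\<close> of \<open>\<integral> g(y - b) ln p\<^sub>\<eta>(y) dy = \<integral> g(u) ln p\<^sub>\<eta>(u + b) du\<close> at
  \<open>b = f\<^sub>\<eta>(x)\<close>, i.e. \<open>E[s(f\<^sub>\<eta>(x) + Z) \<bullet> Df\<^sub>\<eta>(x) h]\<close>. Independence of \<open>X\<close> and \<open>Z\<close>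
  reassembles the outer integral into the expectation of the statement.
\<close>

lemma gauss_dens_pos: "0 < t \<Longrightarrow> 0 < gauss_dens t z"
  by (simp add: gauss_dens_def)

lemma gauss_dens_nonneg [simp]: "0 \<le> gauss_dens t z"
  by (simp add: gauss_dens_def)

lemma gauss_dens_le: "0 < t \<Longrightarrow> gauss_dens t (z::real^'m) \<le> (2 * pi * t) powr (- real CARD('m) / 2)"
  by (simp add: gauss_dens_def)

lemma gauss_dens_eq_inner:
  "gauss_dens t z = (2 * pi * t) powr (- real CARD('m) / 2) * exp ((- 1 / (2 * t)) * (z \<bullet> z))"
  for z :: "real^'m"
  by (simp add: gauss_dens_def power2_norm_eq_inner)

lemma has_derivative_gauss_dens:
  "(gauss_dens t has_derivative (\<lambda>h. - gauss_dens t z * ((z \<bullet> h) / t))) (at z)"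
  for z :: "real^'m"
  unfolding gauss_dens_eq_inner[abs_def]
  by (rule derivative_eq_intros refl | simp add: inner_commute field_simps)+

lemma borel_measurable_gauss_dens [measurable]: "gauss_dens t \<in> borel_measurable borel"
  unfolding gauss_dens_eq_inner[abs_def] by measurable

lemma nn_integral_lborel_scaleR:
  fixes F :: "'a::euclidean_space \<Rightarrow> ennreal"
  assumes [measurable]: "F \<in> borel_measurable borel" and "c \<noteq> 0"
  shows "(\<integral>\<^sup>+x. F x \<partial>lborel) = ennreal (\<bar>c\<bar> ^ DIM('a)) * (\<integral>\<^sup>+x. F (c *\<^sub>R x) \<partial>lborel)"
  by (subst lborel_affine[OF \<open>c \<noteq> 0\<close>, where t = 0])
     (simp add: nn_integral_density nn_integral_distr nn_integral_cmult)

lemma integrable_gauss_dens_ln: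
  assumes t: "0 < t" and int: "integrable lborel (gauss_dens t :: real^'m \<Rightarrow> real)"
  shows "integrable lborel (\<lambda>z::real^'m. gauss_dens t z * ln (gauss_dens t z))"
proof -
  let ?g = "gauss_dens t :: real^'m \<Rightarrow> real"
  define K where "K = (2 * pi * t) powr (- real CARD('m) / 2)"
  define c :: real where "c = 1 / sqrt 2"
  have K: "0 < K" using t by (simp add: K_def)
  have "(\<integral>\<^sup>+x. ennreal (?g x) \<partial>lborel) < \<infinity>"
    using int by (simp add: integrable_iff_bounded)
  moreover have "(\<integral>\<^sup>+x. ennreal (?g x) \<partial>lborel) =
      ennreal (\<bar>c\<bar> ^ DIM(real^'m)) * (\<integral>\<^sup>+x. ennreal (?g (c *\<^sub>R x)) \<partial>lborel)"
    by (rule nn_integral_lborel_scaleR) (auto simp: c_def)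
  ultimately have "(\<integral>\<^sup>+x. ennreal (?g (c *\<^sub>R x)) \<partial>lborel) < \<infinity>"
    by (auto simp: c_def ennreal_mult_less_top top_unique ennreal_mult_eq_top_iff)
  then have int_c: "integrable lborel (\<lambda>x. ?g (c *\<^sub>R x))"
    by (intro integrableI_nonneg) auto
  \<comment> \<open>the factor \<open>a = |z|\<^sup>2/(2t)\<close> coming from \<open>ln g\<close> is absorbed by a Gaussian of twice the variance\<close>
  have bound: "norm (?g z * ln (?g z)) \<le> norm (\<bar>ln K\<bar> * ?g z + 2 * ?g (c *\<^sub>R z))" for z
  proof -
    define a where "a = (z \<bullet> z) / (2 * t)"
    have a: "0 \<le> a" using t by (simp add: a_def)
    have g: "?g z = K * exp (- a)" by (simp add: gauss_dens_eq_inner K_def a_def)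
    have gc: "?g (c *\<^sub>R z) = K * exp (- a / 2)"
      by (simp add: gauss_dens_eq_inner K_def a_def c_def power2_eq_square[symmetric] field_simps)
    have "a \<le> 2 * exp (a / 2)" using exp_ge_add_one_self[of "a / 2"] by linarith
    then have "a * exp (- a) \<le> 2 * exp (a / 2) * exp (- a)" by (intro mult_right_mono) auto
    also have "\<dots> = 2 * exp (- a / 2)" by (simp add: exp_add[symmetric])
    finally have ae: "a * exp (- a) \<le> 2 * exp (- a / 2)" .
    have "\<bar>?g z * ln (?g z)\<bar> = K * exp (- a) * \<bar>ln K - a\<bar>"
      using K by (simp add: g ln_mult abs_mult)
    also have "\<dots> \<le> K * exp (- a) * (\<bar>ln K\<bar> + a)" using K a by (intro mult_left_mono) auto
    also have "\<dots> \<le> \<bar>ln K\<bar> * (K * exp (- a)) + K * (2 * exp (- a / 2))"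
      using K ae by (simp add: algebra_simps)
    finally show ?thesis using K by (simp add: g gc)
  qed
  show ?thesis
  proof (rule Bochner_Integration.integrable_bound[OF _ _ AE_I2[OF bound]])
    show "integrable lborel (\<lambda>z. \<bar>ln K\<bar> * ?g z + 2 * ?g (c *\<^sub>R z))"
      using int int_c by (intro Bochner_Integration.integrable_add integrable_mult_right)
  qed measurable
qed

lemma lborel_integral_translate:
  fixes F :: "'a::euclidean_space \<Rightarrow> real"
  assumes [measurable]: "F \<in> borel_measurable borel"
  shows "(\<integral>x. F (x + c) \<partial>lborel) = (\<integral>x. F x \<partial>lborel)"
  by (subst lborel_distr_plus[symmetric, of c]) (simp add: integral_distr add.commute)

lemma lborel_nn_integral_translate:
  fixes F :: "'a::euclidean_space \<Rightarrow> ennreal"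
  assumes [measurable]: "F \<in> borel_measurable borel"
  shows "(\<integral>\<^sup>+x. F (x + c) \<partial>lborel) = (\<integral>\<^sup>+x. F x \<partial>lborel)"
  by (subst lborel_distr_plus[symmetric, of c]) (simp add: nn_integral_distr add.commute)

lemma borel_measurable_has_derivative_apply_real:
  fixes F :: "'p::real_normed_vector \<Rightarrow> 'b \<Rightarrow> real"
  assumes D: "\<And>x. x \<in> space N \<Longrightarrow> ((\<lambda>\<theta>. F \<theta> x) has_derivative D x) (at q)"
    and F: "\<And>\<theta>. F \<theta> \<in> borel_measurable N"
  shows "(\<lambda>x. D x h) \<in> borel_measurable N"
proof (rule borel_measurable_LIMSEQ_real)
  let ?u = "\<lambda>n x. (F (q + (1 / Suc n) *\<^sub>R h) x - F q x) / (1 / Suc n)"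
  show "?u n \<in> borel_measurable N" for n
    using F by measurable
  fix x assume x: "x \<in> space N"
  have "((\<lambda>r. q + r *\<^sub>R h) has_derivative (\<lambda>r. r *\<^sub>R h)) (at 0)"
    by (rule derivative_eq_intros refl)+ simp
  moreover have "((\<lambda>\<theta>. F \<theta> x) has_derivative D x) (at (q + 0 *\<^sub>R h))"
    using D[OF x] by simp
  ultimately have "((\<lambda>r. F (q + r *\<^sub>R h) x) has_derivative (\<lambda>r. D x (r *\<^sub>R h))) (at 0)"
    by (rule has_derivative_compose)
  moreover have "(\<lambda>r. D x (r *\<^sub>R h)) = (*) (D x h)"
    using has_derivative_linear[OF D[OF x]] by (simp add: linear_scale fun_eq_iff)
  ultimately have "((\<lambda>r. F (q + r *\<^sub>R h) x) has_field_derivative D x h) (at 0)"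
    by (simp add: has_field_derivative_def)
  then have "((\<lambda>r. (F (q + r *\<^sub>R h) x - F q x) / r) \<longlongrightarrow> D x h) (at 0)"
    by (simp add: has_field_derivative_iff)
  moreover have "filterlim (\<lambda>n::nat. 1 / real (Suc n)) (at 0) sequentially"
    by (intro filterlim_atI LIMSEQ_Suc[OF lim_const_over_n]) auto
  ultimately show "(\<lambda>n. ?u n x) \<longlonglongrightarrow> D x h"
    by (rule filterlim_compose)
qed

lemma borel_measurable_has_derivative_apply:
  fixes F :: "'p::real_normed_vector \<Rightarrow> 'b \<Rightarrow> 'c::euclidean_space"
  assumes D: "\<And>x. x \<in> space N \<Longrightarrow> ((\<lambda>\<theta>. F \<theta> x) has_derivative D x) (at q)"
    and F: "\<And>\<theta>. F \<theta> \<in> borel_measurable N"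
  shows "(\<lambda>x. D x h) \<in> borel_measurable N"
proof (subst borel_measurable_euclidean_space, intro ballI)
  fix i :: 'c
  show "(\<lambda>x. D x h \<bullet> i) \<in> borel_measurable N"
  proof (rule borel_measurable_has_derivative_apply_real[where F = "\<lambda>\<theta> x. F \<theta> x \<bullet> i"])
    show "((\<lambda>\<theta>. F \<theta> x \<bullet> i) has_derivative (\<lambda>k. D x k \<bullet> i)) (at q)" if "x \<in> space N" for x
      by (rule bounded_linear.has_derivative[OF bounded_linear_inner_left D[OF that]])
    show "(\<lambda>x. F \<theta> x \<bullet> i) \<in> borel_measurable N" for \<theta>
      using F by measurable
  qed
qed

lemma has_derivative_imp_GDERIV:
  fixes F :: "'a::euclidean_space \<Rightarrow> real"
  assumes "(F has_derivative D) (at y)"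
  shows "GDERIV F y :> adjoint D 1"
proof -
  have "D = (\<lambda>h. h \<bullet> adjoint D 1)"
    using adjoint_works[OF has_derivative_linear[OF assms], of _ 1] by (simp add: fun_eq_iff)
  with assms show ?thesis
    unfolding gderiv_def by simp
qed

lemma borel_measurable_GDERIV:
  fixes L :: "'a::euclidean_space \<Rightarrow> real"
  assumes [measurable]: "L \<in> borel_measurable borel" and S: "\<And>y. GDERIV L y :> S y"
  shows "S \<in> borel_measurable borel"
proof (subst borel_measurable_euclidean_space, intro ballI)
  fix i :: 'a
  have "(\<lambda>y. i \<bullet> S y) \<in> borel_measurable borel"
  proof (rule borel_measurable_has_derivative_apply_real[where F = "\<lambda>\<theta> y. L (y + \<theta>)" and q = 0])
    fix y :: 'a
    show "((\<lambda>\<theta>. L (y + \<theta>)) has_derivative (\<lambda>k. k \<bullet> S y)) (at 0)"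
      using has_derivative_compose[OF has_derivative_add[OF has_derivative_const has_derivative_ident],
          of L "\<lambda>k. k \<bullet> S y" y 0] S[of y] by (simp add: gderiv_def)
  qed measurable
  then show "(\<lambda>y. S y \<bullet> i) \<in> borel_measurable borel"
    by (simp add: inner_commute)
qed

lemma diff_under_integralD:
  assumes "diff_under_integral N F q"
    and "\<And>w. w \<in> space N \<Longrightarrow> ((\<lambda>\<theta>. F \<theta> w) has_derivative D w) (at q)"
  shows "integrable N (\<lambda>w. D w h)"
    and "((\<lambda>\<theta>. \<integral>w. F \<theta> w \<partial>N) has_derivative (\<lambda>h. \<integral>w. D w h \<partial>N)) (at q)"
  using assms unfolding diff_under_integral_def by blast+

lemma has_derivative_integral_entropy:
  fixes q :: "'p::euclidean_space \<Rightarrow> 'b \<Rightarrow> real"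
  assumes pos: "\<And>y. y \<in> space N \<Longrightarrow> 0 < q \<eta> y"
    and normalized: "\<And>\<theta>. (\<integral>y. q \<theta> y \<partial>N) = 1"
    and deriv: "\<And>y. y \<in> space N \<Longrightarrow> ((\<lambda>\<theta>. q \<theta> y) has_derivative Dq y) (at \<eta>)"
    and ex_q: "diff_under_integral N q \<eta>"
    and ex_ent: "diff_under_integral N (\<lambda>\<theta> y. q \<theta> y * ln (q \<theta> y)) \<eta>"
  shows "((\<lambda>\<theta>. \<integral>y. q \<theta> y * ln (q \<theta> y) \<partial>N) has_derivative
           (\<lambda>h. \<integral>y. Dq y h * ln (q \<eta> y) \<partial>N)) (at \<eta>)"
proof -
  define De where "De y h = Dq y h * ln (q \<eta> y) + Dq y h" for y h
  have De: "((\<lambda>\<theta>. q \<theta> y * ln (q \<theta> y)) has_derivative De y) (at \<eta>)" if "y \<in> space N" for y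
  proof -
    have "((\<lambda>\<theta>. ln (q \<theta> y)) has_derivative (\<lambda>h. inverse (q \<eta> y) * Dq y h)) (at \<eta>)"
      using has_derivative_compose[OF deriv[OF that], of ln "(*) (inverse (q \<eta> y))"]
        DERIV_ln[OF pos[OF that]] by (simp add: has_field_derivative_def)
    from has_derivative_mult[OF deriv[OF that] this] show ?thesis
      by (rule has_derivative_eq_rhs) (use pos[OF that] in \<open>simp add: fun_eq_iff De_def\<close>)
  qed
  have Dq_int: "integrable N (\<lambda>y. Dq y h)" for h
    by (rule diff_under_integralD(1)[OF ex_q deriv])
  have "((\<lambda>\<theta>. 1) has_derivative (\<lambda>h. \<integral>y. Dq y h \<partial>N)) (at \<eta>)"
    using diff_under_integralD(2)[OF ex_q deriv] by (simp add: normalized)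
  then have "(\<lambda>h. \<integral>y. Dq y h \<partial>N) = (\<lambda>h. 0)"
    using has_derivative_const by (rule has_derivative_unique)
  then have Dq_zero: "(\<integral>y. Dq y h \<partial>N) = 0" for h
    by (simp add: fun_eq_iff)
  have "integrable N (\<lambda>y. De y h - Dq y h)" for h
    by (intro Bochner_Integration.integrable_diff diff_under_integralD(1)[OF ex_ent De] Dq_int)
  then have "integrable N (\<lambda>y. Dq y h * ln (q \<eta> y))" for h
    by (simp add: De_def)
  then have "(\<integral>y. De y h \<partial>N) = (\<integral>y. Dq y h * ln (q \<eta> y) \<partial>N)" for h
    unfolding De_def using Dq_int by (simp add: Dq_zero)
  with diff_under_integralD(2)[OF ex_ent De] show ?thesis
    by simp
qed

lemma gauss_dens_integration_by_parts:
  fixes L :: "real^'m \<Rightarrow> real"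
  assumes [measurable]: "L \<in> borel_measurable borel"
    and S: "\<And>y. GDERIV L y :> S y"
    and ex_left: "diff_under_integral lborel (\<lambda>b y. gauss_dens t (y - b) * L y) b"
    and ex_right: "diff_under_integral lborel (\<lambda>b u. gauss_dens t u * L (u + b)) b"
  shows "(\<integral>y. gauss_dens t (y - b) * (((y - b) \<bullet> v) / t) * L y \<partial>lborel) =
    (\<integral>u. gauss_dens t u * (v \<bullet> S (u + b)) \<partial>lborel)"
proof -
  have left: "((\<lambda>b. gauss_dens t (y - b) * L y) has_derivative
      (\<lambda>v. gauss_dens t (y - b) * (((y - b) \<bullet> v) / t) * L y)) (at b)" for y
    using has_derivative_mult[OF has_derivative_compose[OF has_derivative_diff[OF has_derivative_const
          has_derivative_ident] has_derivative_gauss_dens] has_derivative_const[of "L y"]]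
    by (rule has_derivative_eq_rhs) (simp add: fun_eq_iff inner_diff_right)
  have right: "((\<lambda>b. gauss_dens t u * L (u + b)) has_derivative
      (\<lambda>v. gauss_dens t u * (v \<bullet> S (u + b)))) (at b)" for u
    using has_derivative_mult[OF has_derivative_const[of "gauss_dens t u"] has_derivative_compose[OF
          has_derivative_add[OF has_derivative_const has_derivative_ident], of L "\<lambda>k. k \<bullet> S (u + b)"]]
      S[of "u + b"]
    by (simp add: gderiv_def)
  \<comment> \<open>both sides are the derivative in \<open>b\<close> of the same convolution, by translation invariance of \<open>lborel\<close>\<close>
  have "(\<integral>u. gauss_dens t u * L (u + c) \<partial>lborel) = (\<integral>y. gauss_dens t (y - c) * L y \<partial>lborel)" for c
    by (rule lborel_integral_translate[of "\<lambda>y. gauss_dens t (y - c) * L y" c, simplified]) measurable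
  then have "((\<lambda>c. \<integral>y. gauss_dens t (y - c) * L y \<partial>lborel) has_derivative
      (\<lambda>v. \<integral>u. gauss_dens t u * (v \<bullet> S (u + b)) \<partial>lborel)) (at b)"
    using diff_under_integralD(2)[OF ex_right right] by simp
  with diff_under_integralD(2)[OF ex_left left]
  have "(\<lambda>v. \<integral>y. gauss_dens t (y - b) * (((y - b) \<bullet> v) / t) * L y \<partial>lborel) =
      (\<lambda>v. \<integral>u. gauss_dens t u * (v \<bullet> S (u + b)) \<partial>lborel)"
    by (rule has_derivative_unique)
  then show ?thesis by (rule fun_cong)
qed

definition marg_dens_deriv ::
  "real \<Rightarrow> (real^'d \<Rightarrow> real^'n \<Rightarrow> real^'m) \<Rightarrow> (real^'d \<Rightarrow> real^'n \<Rightarrow> real^'d \<Rightarrow> real^'m) \<Rightarrow>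
    (real^'n) measure \<Rightarrow> real^'d \<Rightarrow> real^'m \<Rightarrow> real^'d \<Rightarrow> real" where
  "marg_dens_deriv t f Df P \<eta> y h =
    (\<integral>x. gauss_dens t (y - f \<eta> x) * (((y - f \<eta> x) \<bullet> Df \<eta> x h) / t) \<partial>P)"

lemma has_derivative_gauss_dens_shift:
  assumes "((\<lambda>\<theta>. f \<theta> x) has_derivative Df \<eta> x) (at \<eta>)"
  shows "((\<lambda>\<theta>. gauss_dens t (y - f \<theta> x)) has_derivative
    (\<lambda>h. gauss_dens t (y - f \<eta> x) * (((y - f \<eta> x) \<bullet> Df \<eta> x h) / t))) (at \<eta>)"
  using has_derivative_compose[OF has_derivative_diff[OF has_derivative_const assms] has_derivative_gauss_dens]
  by (simp add: inner_diff_right)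

lemma has_derivative_marg_dens:
  assumes "\<And>x. ((\<lambda>\<theta>. f \<theta> x) has_derivative Df \<eta> x) (at \<eta>)"
    and "diff_under_integral P (\<lambda>\<theta> x. gauss_dens t (y - f \<theta> x)) \<eta>"
  shows "((\<lambda>\<theta>. marg_dens t f P \<theta> y) has_derivative marg_dens_deriv t f Df P \<eta> y) (at \<eta>)"
  using diff_under_integralD(2)[OF assms(2) has_derivative_gauss_dens_shift[where f = f and Df = Df, OF assms(1)]]
  by (simp add: marg_dens_def marg_dens_deriv_def[abs_def])

lemma integrable_gauss_dens_shift:
  fixes f :: "'b \<Rightarrow> real^'m"
  assumes P: "finite_measure P" and t: "0 < t" and f: "f \<in> borel_measurable P"
  shows "integrable P (\<lambda>x. gauss_dens t (y - f x))"
proof (rule finite_measure.integrable_const_bound[OF P])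
  have "norm (gauss_dens t z) \<le> (2 * pi * t) powr (- real CARD('m) / 2)" for z :: "real^'m"
    using gauss_dens_le[OF t, of z] by simp
  then show "AE x in P. norm (gauss_dens t (y - f x)) \<le> (2 * pi * t) powr (- real CARD('m) / 2)"
    by simp
qed (use f in measurable)

lemma marg_dens_pos:
  fixes f :: "real^'d \<Rightarrow> real^'n \<Rightarrow> real^'m"
  assumes P: "prob_space P" and t: "0 < t" and f: "f \<theta> \<in> borel_measurable P"
  shows "0 < marg_dens t f P \<theta> y"
proof -
  have int: "integrable P (\<lambda>x. gauss_dens t (y - f \<theta> x))"
    using P t f by (intro integrable_gauss_dens_shift prob_space.finite_measure)
  have "gauss_dens t z \<noteq> 0" for z :: "real^'m"
    using gauss_dens_pos[OF t, of z] by simp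
  then have "\<not> (AE x in P. gauss_dens t (y - f \<theta> x) = 0)"
    using prob_space.AE_False[OF P] by simp
  then have "marg_dens t f P \<theta> y \<noteq> 0"
    unfolding marg_dens_def using integral_nonneg_eq_0_iff_AE[OF int] by simp
  moreover have "0 \<le> marg_dens t f P \<theta> y"
    unfolding marg_dens_def by (simp add: Bochner_Integration.integral_nonneg)
  ultimately show ?thesis by simp
qed

lemma score_GDERIV:
  assumes "(\<lambda>u. ln (marg_dens t f P \<eta> u)) differentiable (at y)"
  shows "GDERIV (\<lambda>u. ln (marg_dens t f P \<eta> u)) y :> score t f P \<eta> y"
proof -
  obtain D where "((\<lambda>u. ln (marg_dens t f P \<eta> u)) has_derivative D) (at y)"
    using assms by (auto simp: differentiable_def)
  then have "GDERIV (\<lambda>u. ln (marg_dens t f P \<eta> u)) y :> adjoint D 1"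
    by (rule has_derivative_imp_GDERIV)
  then show ?thesis
    unfolding score_def by (rule someI)
qed

lemma inner_transpose_matrix_mult:
  fixes D :: "real^'d \<Rightarrow> real^'m"
  assumes "linear D"
  shows "(transpose (matrix D) *v s) \<bullet> h = s \<bullet> D h"
  using matrix_vector_mul(2)[OF assms] by (simp add: dot_lmul_matrix)

lemma integral_pair_lborel_shift:
  fixes H :: "'m::euclidean_space \<Rightarrow> real" and \<phi> :: "'b \<Rightarrow> 'm"
  assumes P: "prob_space P" and [measurable]: "\<phi> \<in> borel_measurable P" and H: "integrable lborel H"
  shows "integrable (P \<Otimes>\<^sub>M lborel) (\<lambda>(x, y). H (y - \<phi> x))"
    and "integral\<^sup>L (P \<Otimes>\<^sub>M lborel) (\<lambda>(x, y). H (y - \<phi> x)) = (\<integral>y. H y \<partial>lborel)"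
proof -
  interpret P: prob_space P by (rule P)
  interpret pair_sigma_finite P lborel ..
  have [measurable]: "H \<in> borel_measurable borel"
    using H by simp
  have shift: "(\<integral>y. F (y - \<phi> x) \<partial>lborel) = (\<integral>y. F y \<partial>lborel)"
    if [measurable]: "F \<in> borel_measurable borel" for F :: "'m \<Rightarrow> real" and x
    using lborel_integral_translate[of "\<lambda>y. F (y - \<phi> x)" "\<phi> x"] by simp
  have "(\<integral>\<^sup>+z. ennreal (norm (H (snd z - \<phi> (fst z)))) \<partial>(P \<Otimes>\<^sub>M lborel)) =
      (\<integral>\<^sup>+x. (\<integral>\<^sup>+y. ennreal (norm (H (y - \<phi> x))) \<partial>lborel) \<partial>P)"
    using lborel.nn_integral_fst[of "\<lambda>z. ennreal (norm (H (snd z - \<phi> (fst z))))" P] by simp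
  also have "\<dots> = (\<integral>\<^sup>+x. (\<integral>\<^sup>+y. ennreal (norm (H y)) \<partial>lborel) \<partial>P)"
  proof (rule nn_integral_cong)
    fix x
    show "(\<integral>\<^sup>+y. ennreal (norm (H (y - \<phi> x))) \<partial>lborel) = (\<integral>\<^sup>+y. ennreal (norm (H y)) \<partial>lborel)"
      using lborel_nn_integral_translate[of "\<lambda>y. ennreal (norm (H (y - \<phi> x)))" "\<phi> x"] by simp
  qed
  also have "\<dots> < \<infinity>"
    using H by (simp add: integrable_iff_bounded P.emeasure_space_1)
  finally show int: "integrable (P \<Otimes>\<^sub>M lborel) (\<lambda>(x, y). H (y - \<phi> x))"
    by (simp add: integrable_iff_bounded split_beta')
  have "integral\<^sup>L (P \<Otimes>\<^sub>M lborel) (\<lambda>(x, y). H (y - \<phi> x)) = (\<integral>x. (\<integral>y. H (y - \<phi> x) \<partial>lborel) \<partial>P)"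
    using integral_fst'[OF int] by simp
  also have "\<dots> = (\<integral>y. H y \<partial>lborel)"
    by (simp add: shift P.prob_space)
  finally show "integral\<^sup>L (P \<Otimes>\<^sub>M lborel) (\<lambda>(x, y). H (y - \<phi> x)) = (\<integral>y. H y \<partial>lborel)" .
qed

lemma nn_integral_gauss_dens_shift:
  assumes P: "prob_space P" and t: "0 < t" and \<phi>: "\<phi> \<in> borel_measurable P"
  shows "(\<integral>\<^sup>+x. ennreal (gauss_dens t (y - \<phi> x)) \<partial>P) = ennreal (\<integral>x. gauss_dens t (y - \<phi> x) \<partial>P)"
  using integrable_gauss_dens_shift[OF prob_space.finite_measure[OF P] t \<phi>]
  by (intro nn_integral_eq_integral) auto

lemma integral_pair_lborel_gauss_dens_mult:
  fixes P :: "'b measure" and t :: real and \<phi> :: "'b \<Rightarrow> real^'m" and F :: "real^'m \<Rightarrow> real"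
  defines "q \<equiv> \<lambda>y. \<integral>x. gauss_dens t (y - \<phi> x) \<partial>P"
  assumes P: "prob_space P" and t: "0 < t" and [measurable]: "\<phi> \<in> borel_measurable P"
    and [measurable]: "F \<in> borel_measurable borel" and int: "integrable lborel (\<lambda>y. q y * F y)"
  shows "integrable (P \<Otimes>\<^sub>M lborel) (\<lambda>(x, y). gauss_dens t (y - \<phi> x) * F y)"
    and "integral\<^sup>L (P \<Otimes>\<^sub>M lborel) (\<lambda>(x, y). gauss_dens t (y - \<phi> x) * F y) = (\<integral>y. q y * F y \<partial>lborel)"
proof -
  interpret P: prob_space P by (rule P)
  interpret pair_sigma_finite P lborel ..
  have q_nonneg: "0 \<le> q y" for y
    unfolding q_def by (simp add: Bochner_Integration.integral_nonneg)
  have "(\<integral>\<^sup>+z. ennreal (norm (gauss_dens t (snd z - \<phi> (fst z)) * F (snd z))) \<partial>(P \<Otimes>\<^sub>M lborel)) =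
      (\<integral>\<^sup>+y. (\<integral>\<^sup>+x. ennreal (gauss_dens t (y - \<phi> x)) * ennreal \<bar>F y\<bar> \<partial>P) \<partial>lborel)"
    using nn_integral_snd[of "\<lambda>z. ennreal (norm (gauss_dens t (snd z - \<phi> (fst z)) * F (snd z)))"]
    by (simp add: abs_mult ennreal_mult)
  also have "\<dots> = (\<integral>\<^sup>+y. ennreal (norm (q y * F y)) \<partial>lborel)"
  proof (rule nn_integral_cong)
    fix y
    show "(\<integral>\<^sup>+x. ennreal (gauss_dens t (y - \<phi> x)) * ennreal \<bar>F y\<bar> \<partial>P) = ennreal (norm (q y * F y))"
      using nn_integral_gauss_dens_shift[OF P t, of \<phi> y] q_nonneg[of y]
      by (simp add: nn_integral_multc q_def abs_mult ennreal_mult)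
  qed
  also have "\<dots> < \<infinity>"
    using int by (simp add: integrable_iff_bounded)
  finally show int2: "integrable (P \<Otimes>\<^sub>M lborel) (\<lambda>(x, y). gauss_dens t (y - \<phi> x) * F y)"
    by (simp add: integrable_iff_bounded split_beta')
  have "integral\<^sup>L (P \<Otimes>\<^sub>M lborel) (\<lambda>(x, y). gauss_dens t (y - \<phi> x) * F y) =
      (\<integral>y. (\<integral>x. gauss_dens t (y - \<phi> x) * F y \<partial>P) \<partial>lborel)"
    using integral_snd[of "\<lambda>x y. gauss_dens t (y - \<phi> x) * F y"] int2 by simp
  then show "integral\<^sup>L (P \<Otimes>\<^sub>M lborel) (\<lambda>(x, y). gauss_dens t (y - \<phi> x) * F y) = (\<integral>y. q y * F y \<partial>lborel)"
    by (simp add: q_def)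
qed

locale gaussian_channel = prob_space M for M :: "'a measure" +
  fixes X :: "'a \<Rightarrow> real^'n" and Z :: "'a \<Rightarrow> real^'m" and t :: real
  assumes t_pos: "0 < t"
    and X_measurable [measurable]: "X \<in> borel_measurable M"
    and Z_distributed: "distributed M lborel Z (\<lambda>z. ennreal (gauss_dens t z))"
    and indep_X_Z: "indep_set
      (sigma_sets (space M) {X -` A \<inter> space M | A. A \<in> sets (borel :: (real^'n) measure)})
      (sigma_sets (space M) {Z -` A \<inter> space M | A. A \<in> sets (borel :: (real^'m) measure)})"
begin

abbreviation PX :: "(real^'n) measure" where
  "PX \<equiv> distr M borel X"

lemma Z_measurable [measurable]: "Z \<in> borel_measurable M"
  using distributed_measurable[OF Z_distributed] by (simp add: measurable_def)

lemma prob_space_PX: "prob_space PX"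
  by (rule prob_space_distr) simp

lemma distr_Z: "distr M borel Z = density lborel (\<lambda>z. ennreal (gauss_dens t z))"
  unfolding distributed_distr_eq_density[OF Z_distributed, symmetric] by (rule distr_cong) auto

lemma integrable_gauss_dens: "integrable lborel (gauss_dens t :: real^'m \<Rightarrow> real)"
  using distributed_integrable[OF Z_distributed, of "\<lambda>_. 1"] by simp

lemma distr_X_Z: "distr M (borel \<Otimes>\<^sub>M borel) (\<lambda>\<omega>. (X \<omega>, Z \<omega>)) = PX \<Otimes>\<^sub>M distr M borel Z"
proof (rule pair_measure_eqI[symmetric])
  show "sigma_finite_measure PX"
    by (rule prob_space_imp_sigma_finite[OF prob_space_PX])
  show "sigma_finite_measure (distr M borel Z)"
    by (rule prob_space_imp_sigma_finite[OF prob_space_distr]) simp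
  show "sets (PX \<Otimes>\<^sub>M distr M borel Z) = sets (distr M (borel \<Otimes>\<^sub>M borel) (\<lambda>\<omega>. (X \<omega>, Z \<omega>)))"
    by (rule trans[OF sets_pair_measure_cong[OF sets_distr sets_distr] sets_distr[symmetric]])
  fix A B assume "A \<in> sets PX" "B \<in> sets (distr M borel Z)"
  then have [measurable]: "A \<in> sets borel" "B \<in> sets borel" by auto
  have "emeasure PX A * emeasure (distr M borel Z) B =
      emeasure M (X -` A \<inter> space M) * emeasure M (Z -` B \<inter> space M)"
    by (simp add: emeasure_distr)
  also have "\<dots> = emeasure M (X -` A \<inter> space M \<inter> (Z -` B \<inter> space M))"
  proof -
    have "prob (X -` A \<inter> space M \<inter> (Z -` B \<inter> space M)) = prob (X -` A \<inter> space M) * prob (Z -` B \<inter> space M)"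
      by (rule indep_setD[OF indep_X_Z]) (auto intro!: sigma_sets.Basic)
    then show ?thesis
      by (simp add: emeasure_eq_measure ennreal_mult)
  qed
  also have "\<dots> = emeasure M ((\<lambda>\<omega>. (X \<omega>, Z \<omega>)) -` (A \<times> B) \<inter> space M)"
    by (rule arg_cong[where f = "emeasure M"]) auto
  also have "\<dots> = emeasure (distr M (borel \<Otimes>\<^sub>M borel) (\<lambda>\<omega>. (X \<omega>, Z \<omega>))) (A \<times> B)"
    by (rule emeasure_distr[symmetric]) auto
  finally show "emeasure PX A * emeasure (distr M borel Z) B =
      emeasure (distr M (borel \<Otimes>\<^sub>M borel) (\<lambda>\<omega>. (X \<omega>, Z \<omega>))) (A \<times> B)" .
qed

lemma integral_X_Z:
  fixes H :: "real^'n \<Rightarrow> real^'m \<Rightarrow> real"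
  assumes [measurable]: "case_prod H \<in> borel_measurable (borel \<Otimes>\<^sub>M borel)"
    and int: "integrable M (\<lambda>\<omega>. H (X \<omega>) (Z \<omega>))"
  shows "(\<integral>\<omega>. H (X \<omega>) (Z \<omega>) \<partial>M) = (\<integral>x. (\<integral>\<omega>. H x (Z \<omega>) \<partial>M) \<partial>PX)"
proof -
  interpret PX: prob_space PX by (rule prob_space_PX)
  interpret PZ: prob_space "distr M borel Z" by (rule prob_space_distr) simp
  interpret pair_sigma_finite PX "distr M borel Z" ..
  have int_XZ: "integrable (PX \<Otimes>\<^sub>M distr M borel Z) (case_prod H)"
    using int unfolding distr_X_Z[symmetric] by (subst integrable_distr_eq) auto
  have "(\<integral>xz. case_prod H xz \<partial>(PX \<Otimes>\<^sub>M distr M borel Z)) = (\<integral>x. (\<integral>z. H x z \<partial>distr M borel Z) \<partial>PX)"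
    using integral_fst'[OF int_XZ] by simp
  then show ?thesis
    by (simp add: distr_X_Z[symmetric] integral_distr)
qed

lemma distr_X_channel:
  assumes [measurable]: "\<phi> \<in> borel_measurable borel"
  shows "distr M (borel \<Otimes>\<^sub>M borel) (\<lambda>\<omega>. (X \<omega>, \<phi> (X \<omega>) + Z \<omega>)) =
    density (PX \<Otimes>\<^sub>M lborel) (\<lambda>(x, y). ennreal (gauss_dens t (y - \<phi> x)))"
proof (rule measure_eqI)
  interpret PZ: prob_space "distr M borel Z" by (rule prob_space_distr) simp
  fix A assume "A \<in> sets (distr M (borel \<Otimes>\<^sub>M borel) (\<lambda>\<omega>. (X \<omega>, \<phi> (X \<omega>) + Z \<omega>)))"
  then have [measurable]: "A \<in> sets (borel \<Otimes>\<^sub>M borel)" by simp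
  have "emeasure (distr M (borel \<Otimes>\<^sub>M borel) (\<lambda>\<omega>. (X \<omega>, \<phi> (X \<omega>) + Z \<omega>))) A =
      (\<integral>\<^sup>+xz. indicator A (fst xz, \<phi> (fst xz) + snd xz) \<partial>distr M (borel \<Otimes>\<^sub>M borel) (\<lambda>\<omega>. (X \<omega>, Z \<omega>)))"
    by (simp add: emeasure_distr nn_integral_distr flip: nn_integral_indicator)
  also have "\<dots> = (\<integral>\<^sup>+x. (\<integral>\<^sup>+z. indicator A (x, \<phi> x + z) \<partial>distr M borel Z) \<partial>PX)"
    using PZ.nn_integral_fst[of "\<lambda>xz. indicator A (fst xz, \<phi> (fst xz) + snd xz)" PX]
    by (simp add: distr_X_Z)
  also have "\<dots> = (\<integral>\<^sup>+x. (\<integral>\<^sup>+z. ennreal (gauss_dens t z) * indicator A (x, \<phi> x + z) \<partial>lborel) \<partial>PX)"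
    by (simp add: distr_Z nn_integral_density)
  also have "\<dots> = (\<integral>\<^sup>+x. (\<integral>\<^sup>+y. ennreal (gauss_dens t (y - \<phi> x)) * indicator A (x, y) \<partial>lborel) \<partial>PX)"
  proof (rule nn_integral_cong)
    fix x
    show "(\<integral>\<^sup>+z. ennreal (gauss_dens t z) * indicator A (x, \<phi> x + z) \<partial>lborel) =
        (\<integral>\<^sup>+y. ennreal (gauss_dens t (y - \<phi> x)) * indicator A (x, y) \<partial>lborel)"
      using lborel_nn_integral_translate[of "\<lambda>y. ennreal (gauss_dens t (y - \<phi> x)) * indicator A (x, y)" "\<phi> x"]
      by (simp add: add.commute)
  qed
  also have "\<dots> = emeasure (density (PX \<Otimes>\<^sub>M lborel) (\<lambda>(x, y). ennreal (gauss_dens t (y - \<phi> x)))) A"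
    using lborel.nn_integral_fst[of "\<lambda>xy. ennreal (gauss_dens t (snd xy - \<phi> (fst xy))) * indicator A xy" PX]
    by (simp add: emeasure_density split_beta')
  finally show "emeasure (distr M (borel \<Otimes>\<^sub>M borel) (\<lambda>\<omega>. (X \<omega>, \<phi> (X \<omega>) + Z \<omega>))) A =
      emeasure (density (PX \<Otimes>\<^sub>M lborel) (\<lambda>(x, y). ennreal (gauss_dens t (y - \<phi> x)))) A" .
qed simp

lemma borel_measurable_marg_dens [measurable]:
  fixes f :: "real^'d \<Rightarrow> real^'n \<Rightarrow> real^'m"
  assumes [measurable]: "f \<theta> \<in> borel_measurable borel"
  shows "marg_dens t f PX \<theta> \<in> borel_measurable borel"
proof -
  have "marg_dens t f PX \<theta> = (\<lambda>y. \<integral>\<omega>. gauss_dens t (y - f \<theta> (X \<omega>)) \<partial>M)"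
    by (simp add: marg_dens_def integral_distr fun_eq_iff)
  then show ?thesis
    by simp
qed

lemma distr_channel:
  fixes f :: "real^'d \<Rightarrow> real^'n \<Rightarrow> real^'m"
  assumes [measurable]: "f \<theta> \<in> borel_measurable borel"
  shows "distr M borel (\<lambda>\<omega>. f \<theta> (X \<omega>) + Z \<omega>) = density lborel (\<lambda>y. ennreal (marg_dens t f PX \<theta> y))"
proof (rule measure_eqI)
  interpret PX: prob_space PX by (rule prob_space_PX)
  interpret pair_sigma_finite PX lborel ..
  fix A assume "A \<in> sets (distr M borel (\<lambda>\<omega>. f \<theta> (X \<omega>) + Z \<omega>))"
  then have [measurable]: "A \<in> sets borel" by simp
  have "snd -` A \<inter> space (borel \<Otimes>\<^sub>M borel) \<in> sets (borel \<Otimes>\<^sub>M borel :: ((real^'n) \<times> (real^'m)) measure)"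
    by (rule measurable_sets[OF measurable_snd]) simp
  then have [measurable]: "snd -` A \<in> sets (borel \<Otimes>\<^sub>M borel :: ((real^'n) \<times> (real^'m)) measure)"
    by (simp add: space_pair_measure)
  have "distr M borel (\<lambda>\<omega>. f \<theta> (X \<omega>) + Z \<omega>) =
      distr (distr M (borel \<Otimes>\<^sub>M borel) (\<lambda>\<omega>. (X \<omega>, f \<theta> (X \<omega>) + Z \<omega>))) borel snd"
    by (subst distr_distr) (auto simp: comp_def)
  also have "\<dots> = distr (density (PX \<Otimes>\<^sub>M lborel) (\<lambda>(x, y). ennreal (gauss_dens t (y - f \<theta> x)))) borel snd"
    by (simp only: distr_X_channel[OF assms])
  finally have "emeasure (distr M borel (\<lambda>\<omega>. f \<theta> (X \<omega>) + Z \<omega>)) A =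
      emeasure (density (PX \<Otimes>\<^sub>M lborel) (\<lambda>(x, y). ennreal (gauss_dens t (y - f \<theta> x))))
        (snd -` A \<inter> space (PX \<Otimes>\<^sub>M lborel))"
    by (simp add: emeasure_distr)
  also have "\<dots> = (\<integral>\<^sup>+z. ennreal (gauss_dens t (snd z - f \<theta> (fst z))) * indicator A (snd z) \<partial>(PX \<Otimes>\<^sub>M lborel))"
    by (subst emeasure_density)
       (auto simp: split_beta' space_pair_measure intro!: nn_integral_cong split: split_indicator)
  also have "\<dots> = (\<integral>\<^sup>+y. (\<integral>\<^sup>+x. ennreal (gauss_dens t (y - f \<theta> x)) \<partial>PX) * indicator A y \<partial>lborel)"
    by (simp add: nn_integral_snd[symmetric] nn_integral_multc)
  also have "\<dots> = emeasure (density lborel (\<lambda>y. ennreal (marg_dens t f PX \<theta> y))) A"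
    by (simp add: emeasure_density nn_integral_gauss_dens_shift[OF prob_space_PX t_pos] marg_dens_def)
  finally show "emeasure (distr M borel (\<lambda>\<omega>. f \<theta> (X \<omega>) + Z \<omega>)) A =
      emeasure (density lborel (\<lambda>y. ennreal (marg_dens t f PX \<theta> y))) A" .
qed simp

lemma integral_marg_dens:
  fixes f :: "real^'d \<Rightarrow> real^'n \<Rightarrow> real^'m"
  assumes [measurable]: "f \<theta> \<in> borel_measurable borel"
  shows "(\<integral>y. marg_dens t f PX \<theta> y \<partial>lborel) = 1"
proof -
  have "(\<integral>\<^sup>+y. ennreal (marg_dens t f PX \<theta> y) \<partial>lborel) = emeasure (distr M borel (\<lambda>\<omega>. f \<theta> (X \<omega>) + Z \<omega>)) UNIV"
    by (simp add: distr_channel emeasure_density)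
  also have "\<dots> = 1"
    by (simp add: emeasure_distr emeasure_space_1)
  finally show ?thesis
    using marg_dens_pos[OF prob_space_PX t_pos, of f \<theta>]
    by (subst integral_eq_nn_integral) (auto simp: less_imp_le marg_dens_def)
qed

lemma PX_times_distr_channel:
  fixes f :: "real^'d \<Rightarrow> real^'n \<Rightarrow> real^'m"
  assumes [measurable]: "f \<theta> \<in> borel_measurable borel"
  shows "PX \<Otimes>\<^sub>M distr M borel (\<lambda>\<omega>. f \<theta> (X \<omega>) + Z \<omega>) =
    density (PX \<Otimes>\<^sub>M lborel) (\<lambda>(x, y). ennreal (marg_dens t f PX \<theta> y))"
proof -
  have "PX \<Otimes>\<^sub>M distr M borel (\<lambda>\<omega>. f \<theta> (X \<omega>) + Z \<omega>) =
      density PX (\<lambda>_. 1) \<Otimes>\<^sub>M density lborel (marg_dens t f PX \<theta>)"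
    by (simp add: density_1 distr_channel)
  also have "\<dots> = density (PX \<Otimes>\<^sub>M lborel) (\<lambda>(x, y). 1 * ennreal (marg_dens t f PX \<theta> y))"
  proof (rule pair_measure_density)
    show "sigma_finite_measure (density lborel (marg_dens t f PX \<theta>))"
      unfolding distr_channel[where f = f and \<theta> = \<theta>, OF assms, symmetric]
      by (rule prob_space_imp_sigma_finite[OF prob_space_distr]) simp
  qed (auto simp: lborel.sigma_finite_measure_axioms)
  finally show ?thesis
    by simp
qed

lemma mutual_information_channel:
  fixes f :: "real^'d \<Rightarrow> real^'n \<Rightarrow> real^'m" and \<theta> :: "real^'d"
  defines "p \<equiv> marg_dens t f PX \<theta>"
  assumes f_meas [measurable]: "f \<theta> \<in> borel_measurable borel"
    and int_ent: "integrable lborel (\<lambda>y. p y * ln (p y))"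
  shows "mutual_information (exp 1) borel borel X (\<lambda>\<omega>. f \<theta> (X \<omega>) + Z \<omega>) =
    (\<integral>z. gauss_dens t (z::real^'m) * ln (gauss_dens t z) \<partial>lborel) - (\<integral>y. p y * ln (p y) \<partial>lborel)"
proof -
  interpret PX: prob_space PX by (rule prob_space_PX)
  interpret pair_sigma_finite PX lborel ..
  let ?G = "\<lambda>(x, y). gauss_dens t (y - f \<theta> x)" and ?P = "\<lambda>(x, y). p y"
  have p_pos: "0 < p y" for y
    unfolding p_def using prob_space_PX t_pos by (rule marg_dens_pos) simp
  then have p_ne: "p y \<noteq> 0" for y
    by (simp add: less_le)
  have [measurable]: "p \<in> borel_measurable borel"
    unfolding p_def by measurable
  have product: "PX \<Otimes>\<^sub>M distr M borel (\<lambda>\<omega>. f \<theta> (X \<omega>) + Z \<omega>) =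
      density (PX \<Otimes>\<^sub>M lborel) (\<lambda>z. ennreal (?P z))"
    by (simp add: PX_times_distr_channel split_beta' p_def)
  have joint: "distr M (borel \<Otimes>\<^sub>M borel) (\<lambda>\<omega>. (X \<omega>, f \<theta> (X \<omega>) + Z \<omega>)) =
      density (PX \<Otimes>\<^sub>M lborel) (\<lambda>z. ennreal (?G z))"
    by (simp add: distr_X_channel split_beta')
  have f_meas_PX: "f \<theta> \<in> borel_measurable PX"
    by simp
  note int_G = integral_pair_lborel_shift[OF prob_space_PX f_meas_PX
      integrable_gauss_dens_ln[OF t_pos integrable_gauss_dens]]
  note int_P = integral_pair_lborel_gauss_dens_mult[OF prob_space_PX t_pos f_meas_PX _
      int_ent[unfolded p_def marg_dens_def], folded marg_dens_def p_def]
  have "mutual_information (exp 1) borel borel X (\<lambda>\<omega>. f \<theta> (X \<omega>) + Z \<omega>) =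
      KL_divergence (exp 1) (density (PX \<Otimes>\<^sub>M lborel) (\<lambda>z. ennreal (?P z)))
        (density (PX \<Otimes>\<^sub>M lborel) (\<lambda>z. ennreal (?G z)))"
    unfolding mutual_information_def product joint ..
  also have "\<dots> = (\<integral>z. ?G z * log (exp 1) (?G z / ?P z) \<partial>(PX \<Otimes>\<^sub>M lborel))"
    using p_pos by (intro KL_density_density) (auto simp: split_beta' less_imp_le p_ne intro!: AE_I2)
  also have "\<dots> = (\<integral>z. ?G z * ln (?G z) - ?G z * ln (?P z) \<partial>(PX \<Otimes>\<^sub>M lborel))"
    using p_pos gauss_dens_pos[OF t_pos]
    by (intro Bochner_Integration.integral_cong) (auto simp: log_def ln_div right_diff_distrib p_ne)
  also have "\<dots> = (\<integral>z. ?G z * ln (?G z) \<partial>(PX \<Otimes>\<^sub>M lborel)) - (\<integral>z. ?G z * ln (?P z) \<partial>(PX \<Otimes>\<^sub>M lborel))"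
    using int_G(1) int_P(1) by (intro Bochner_Integration.integral_diff) (simp_all add: split_beta')
  also have "\<dots> = (\<integral>z. gauss_dens t (z::real^'m) * ln (gauss_dens t z) \<partial>lborel) - (\<integral>y. p y * ln (p y) \<partial>lborel)"
    using int_G(2) int_P(2) by (simp add: split_beta')
  finally show ?thesis .
qed

lemma has_derivative_mutual_information_channel:
  fixes f :: "real^'d \<Rightarrow> real^'n \<Rightarrow> real^'m"
  defines "p \<equiv> marg_dens t f PX"
  assumes f_meas: "\<And>\<theta>. f \<theta> \<in> borel_measurable borel"
    and f_diff: "\<And>x. ((\<lambda>\<theta>. f \<theta> x) has_derivative Df \<eta> x) (at \<eta>)"
    and ex_p: "\<And>y. diff_under_integral PX (\<lambda>\<theta> x. gauss_dens t (y - f \<theta> x)) \<eta>"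
    and ex_int_p: "diff_under_integral lborel p \<eta>"
    and ex_ent: "diff_under_integral lborel (\<lambda>\<theta> y. p \<theta> y * ln (p \<theta> y)) \<eta>"
    and int_ent: "\<And>\<theta>. integrable lborel (\<lambda>y. p \<theta> y * ln (p \<theta> y))"
  shows "((\<lambda>\<theta>. mutual_information (exp 1) borel borel X (\<lambda>\<omega>. f \<theta> (X \<omega>) + Z \<omega>)) has_derivative
    (\<lambda>h. - (\<integral>y. marg_dens_deriv t f Df PX \<eta> y h * ln (p \<eta> y) \<partial>lborel))) (at \<eta>)"
proof -
  have "((\<lambda>\<theta>. \<integral>y. p \<theta> y * ln (p \<theta> y) \<partial>lborel) has_derivative
      (\<lambda>h. \<integral>y. marg_dens_deriv t f Df PX \<eta> y h * ln (p \<eta> y) \<partial>lborel)) (at \<eta>)"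
  proof (rule has_derivative_integral_entropy)
    show "0 < p \<eta> y" for y
      unfolding p_def using prob_space_PX t_pos by (rule marg_dens_pos) (simp add: f_meas)
    show "(\<integral>y. p \<theta> y \<partial>lborel) = 1" for \<theta>
      unfolding p_def using f_meas by (rule integral_marg_dens)
    show "((\<lambda>\<theta>. p \<theta> y) has_derivative marg_dens_deriv t f Df PX \<eta> y) (at \<eta>)" for y
      unfolding p_def using f_diff ex_p by (rule has_derivative_marg_dens)
  qed (fact ex_int_p ex_ent)+
  then show ?thesis
    unfolding mutual_information_channel[OF f_meas int_ent[unfolded p_def], folded p_def]
    by (auto intro!: derivative_eq_intros)
qed

lemma stein_identity:
  fixes L :: "real^'m \<Rightarrow> real"
  assumes [measurable]: "L \<in> borel_measurable borel"
    and L_grad: "\<And>y. GDERIV L y :> S y"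
    and ex_left: "diff_under_integral lborel (\<lambda>b y. gauss_dens t (y - b) * L y) b"
    and ex_right: "diff_under_integral lborel (\<lambda>b u. gauss_dens t u * L (u + b)) b"
  shows "(\<integral>y. gauss_dens t (y - b) * (((y - b) \<bullet> v) / t) * L y \<partial>lborel) = (\<integral>\<omega>. S (b + Z \<omega>) \<bullet> v \<partial>M)"
proof -
  have [measurable]: "S \<in> borel_measurable borel"
    using assms(1) L_grad by (rule borel_measurable_GDERIV)
  have "(\<integral>y. gauss_dens t (y - b) * (((y - b) \<bullet> v) / t) * L y \<partial>lborel) =
      (\<integral>u. gauss_dens t u * (v \<bullet> S (u + b)) \<partial>lborel)"
    using assms(1) L_grad ex_left ex_right by (rule gauss_dens_integration_by_parts)
  also have "\<dots> = (\<integral>\<omega>. S (b + Z \<omega>) \<bullet> v \<partial>M)"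
    by (subst distributed_integral[OF Z_distributed, symmetric]) (auto simp: add.commute inner_commute)
  finally show ?thesis .
qed

lemma integral_marg_dens_deriv_mult:
  fixes f :: "real^'d \<Rightarrow> real^'n \<Rightarrow> real^'m" and L :: "real^'m \<Rightarrow> real"
  assumes f_meas [measurable]: "\<And>\<theta>. f \<theta> \<in> borel_measurable borel"
    and f_diff: "\<And>x. ((\<lambda>\<theta>. f \<theta> x) has_derivative Df \<eta> x) (at \<eta>)"
    and L_meas [measurable]: "L \<in> borel_measurable borel"
    and L_grad: "\<And>y. GDERIV L y :> S y"
    and ex_left: "\<And>b. diff_under_integral lborel (\<lambda>b y. gauss_dens t (y - b) * L y) b"
    and ex_right: "\<And>b. diff_under_integral lborel (\<lambda>b u. gauss_dens t u * L (u + b)) b"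
    and fubini: "integrable (PX \<Otimes>\<^sub>M lborel)
      (\<lambda>(x, y). gauss_dens t (y - f \<eta> x) * (((y - f \<eta> x) \<bullet> Df \<eta> x h) / t) * L y)"
    and int_grad: "integrable M (\<lambda>\<omega>. transpose (matrix (Df \<eta> (X \<omega>))) *v S (f \<eta> (X \<omega>) + Z \<omega>))"
  shows "(\<integral>y. marg_dens_deriv t f Df PX \<eta> y h * L y \<partial>lborel) =
    (\<integral>\<omega>. transpose (matrix (Df \<eta> (X \<omega>))) *v S (f \<eta> (X \<omega>) + Z \<omega>) \<partial>M) \<bullet> h"
proof -
  interpret PX: prob_space PX by (rule prob_space_PX)
  interpret pair_sigma_finite PX lborel ..
  have [measurable]: "S \<in> borel_measurable borel"
    using L_meas L_grad by (rule borel_measurable_GDERIV)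
  have [measurable]: "(\<lambda>x. Df \<eta> x h) \<in> borel_measurable borel"
    using f_diff f_meas by (rule borel_measurable_has_derivative_apply)
  have grad_h: "(transpose (matrix (Df \<eta> x)) *v s) \<bullet> h = s \<bullet> Df \<eta> x h" for x s
    using has_derivative_linear[OF f_diff] by (rule inner_transpose_matrix_mult)
  have "(\<integral>y. marg_dens_deriv t f Df PX \<eta> y h * L y \<partial>lborel) =
      (\<integral>y. (\<integral>x. gauss_dens t (y - f \<eta> x) * (((y - f \<eta> x) \<bullet> Df \<eta> x h) / t) * L y \<partial>PX) \<partial>lborel)"
    by (simp add: marg_dens_deriv_def)
  also have "\<dots> = (\<integral>x. (\<integral>y. gauss_dens t (y - f \<eta> x) * (((y - f \<eta> x) \<bullet> Df \<eta> x h) / t) * L y \<partial>lborel) \<partial>PX)"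
    using fubini by (rule Fubini_integral)
  also have "\<dots> = (\<integral>x. (\<integral>\<omega>. S (f \<eta> x + Z \<omega>) \<bullet> Df \<eta> x h \<partial>M) \<partial>PX)"
    using stein_identity[OF L_meas L_grad ex_left ex_right] by simp
  also have "\<dots> = (\<integral>\<omega>. S (f \<eta> (X \<omega>) + Z \<omega>) \<bullet> Df \<eta> (X \<omega>) h \<partial>M)"
  proof (rule integral_X_Z[where H = "\<lambda>x z. S (f \<eta> x + z) \<bullet> Df \<eta> x h", symmetric])
    show "integrable M (\<lambda>\<omega>. S (f \<eta> (X \<omega>) + Z \<omega>) \<bullet> Df \<eta> (X \<omega>) h)"
      using integrable_inner_left[OF int_grad, of h] by (simp only: grad_h)
  qed measurable
  also have "\<dots> = (\<integral>\<omega>. transpose (matrix (Df \<eta> (X \<omega>))) *v S (f \<eta> (X \<omega>) + Z \<omega>) \<partial>M) \<bullet> h"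
    using int_grad by (simp add: grad_h[symmetric])
  finally show ?thesis .
qed

end

theorem proposition1:
  fixes M :: "'a measure"
    and X :: "'a \<Rightarrow> real^'n"
    and Z :: "'a \<Rightarrow> real^'m"
    and f :: "real^'d \<Rightarrow> real^'n \<Rightarrow> real^'m"
    and Df :: "real^'d \<Rightarrow> real^'n \<Rightarrow> real^'d \<Rightarrow> real^'m"
    and t :: real
  defines "PX \<equiv> distr M borel X"
  defines "p \<equiv> marg_dens t f PX"
  defines "s \<equiv> score t f PX"
  assumes M: "prob_space M"
    and t: "t > 0"
    and X: "X \<in> borel_measurable M"
    and Z: "distributed M lborel Z (\<lambda>z. ennreal (gauss_dens t z))"
    and indep: "prob_space.indep_set M
        (sigma_sets (space M) {X -` A \<inter> space M | A. A \<in> sets (borel :: (real^'n) measure)})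
        (sigma_sets (space M) {Z -` A \<inter> space M | A. A \<in> sets (borel :: (real^'m) measure)})"
    and f_meas: "\<And>\<eta>. f \<eta> \<in> borel_measurable borel"
    and f_diff: "\<And>\<eta> x. ((\<lambda>\<theta>. f \<theta> x) has_derivative Df \<eta> x) (at \<eta>)"
    and p_diff_y: "\<And>\<eta> y. (\<lambda>u. ln (p \<eta> u)) differentiable (at y)"
    and ex_p: "\<And>\<eta> y. diff_under_integral PX (\<lambda>\<theta> x. gauss_dens t (y - f \<theta> x)) \<eta>"
    and ex_int_p: "\<And>\<eta>. diff_under_integral lborel (\<lambda>\<theta> y. p \<theta> y) \<eta>"
    and ex_ent: "\<And>\<eta>. diff_under_integral lborel (\<lambda>\<theta> y. p \<theta> y * ln (p \<theta> y)) \<eta>"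
    and int_ent: "\<And>\<eta>. integrable lborel (\<lambda>y. p \<eta> y * ln (p \<eta> y))"
    and ex_shift1: "\<And>\<eta> a. diff_under_integral lborel (\<lambda>b y. gauss_dens t (y - b) * ln (p \<eta> y)) a"
    and ex_shift2: "\<And>\<eta> a. diff_under_integral lborel (\<lambda>b u. gauss_dens t u * ln (p \<eta> (u + b))) a"
    and fubini: "\<And>\<eta> h. integrable (PX \<Otimes>\<^sub>M lborel)
        (\<lambda>(x, y). gauss_dens t (y - f \<eta> x) * (((y - f \<eta> x) \<bullet> Df \<eta> x h) / t) * ln (p \<eta> y))"
    and int_grad: "\<And>\<eta>. integrable M
        (\<lambda>\<omega>. transpose (matrix (Df \<eta> (X \<omega>))) *v s \<eta> (f \<eta> (X \<omega>) + Z \<omega>))"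
  shows "GDERIV (\<lambda>\<eta>. prob_space.mutual_information M (exp 1) borel borel X
                        (\<lambda>\<omega>. f \<eta> (X \<omega>) + Z \<omega>)) \<eta> :>
           - (\<integral>\<omega>. transpose (matrix (Df \<eta> (X \<omega>))) *v s \<eta> (f \<eta> (X \<omega>) + Z \<omega>) \<partial>M)"
proof -
  interpret gaussian_channel M X Z t
    using M t X Z indep unfolding gaussian_channel_def gaussian_channel_axioms_def by blast
  have "((\<lambda>\<eta>. prob_space.mutual_information M (exp 1) borel borel X (\<lambda>\<omega>. f \<eta> (X \<omega>) + Z \<omega>))
      has_derivative (\<lambda>h. - (\<integral>y. marg_dens_deriv t f Df PX \<eta> y h * ln (p \<eta> y) \<partial>lborel))) (at \<eta>)"
    using f_meas f_diff ex_p ex_int_p ex_ent int_ent unfolding p_def PX_def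
    by (rule has_derivative_mutual_information_channel)
  moreover have "(\<integral>y. marg_dens_deriv t f Df PX \<eta> y h * ln (p \<eta> y) \<partial>lborel) =
      (\<integral>\<omega>. transpose (matrix (Df \<eta> (X \<omega>))) *v s \<eta> (f \<eta> (X \<omega>) + Z \<omega>) \<partial>M) \<bullet> h" for h
    unfolding PX_def
  proof (rule integral_marg_dens_deriv_mult[where L = "\<lambda>u. ln (p \<eta> u)" and S = "s \<eta>"])
    show "(\<lambda>u. ln (p \<eta> u)) \<in> borel_measurable borel"
      unfolding p_def PX_def using f_meas by measurable
    show "GDERIV (\<lambda>u. ln (p \<eta> u)) y :> s \<eta> y" for y
      unfolding p_def s_def using p_diff_y[unfolded p_def] by (rule score_GDERIV)
  qed (use f_meas f_diff ex_shift1 ex_shift2 fubini int_grad in \<open>simp_all add: PX_def\<close>)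
  ultimately show ?thesis
    unfolding gderiv_def by (simp add: inner_commute)
qed

end
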